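(* Let $\mathbf a=(a_0,a_1,\dots)\in\mathbb{R}^{\mathbb{N}}$ with $a_0=0$. The linear centrality $f^{\mathbf a}$ is score monotone if and only if $\mathbf a\ge 0$, $\Delta\mathbf a\le 0$ and $(\Delta\mathbf a)_1<0$; equivalently, $a_1>a_2$ and $a_i\ge a_{i+1}\ge 0$ for all $i\ge 1$.
   Context: Graphs are finite directed graphs; $d_G(x,y)$ is the shortest directed path length from $x$ to $y$ ($\infty$ if none). The linear centrality is $f^{\mathbf a}_G(i)=\sum_{z\in V_G,\ d_G(z,i)<\infty}a_{d_G(z,i)}$. A centrality $f$ is score monotone if for every graph $G$ and every pair of distinct nodes $x,y$ with $(x,y)\notin E_G$, letting $G'$ be $G$ with the arc $x\to y$ added, $f_{G'}(y)>f_G(y)$. For a sequence $\mathbf a$, $\Delta\mathbf a$ is the sequence with $(\Delta\mathbf a)_0=0$ and $(\Delta\mathbf a)_i=a_{i+1}-a_i$ for $i>0$; $\mathbf a\ge0$ ($\le 0$) means every entry is $\ge0$ ($\le0$). *)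

theory Defs
  imports Main "HOL-Library.Extended_Nat"
begin

definition is_graph :: "nat set \<Rightarrow> (nat \<times> nat) set \<Rightarrow> bool" where
  "is_graph V E \<longleftrightarrow> finite V \<and> E \<subseteq> V \<times> V"

definition gdist :: "(nat \<times> nat) set \<Rightarrow> nat \<Rightarrow> nat \<Rightarrow> enat" where
  "gdist E x y = (if \<exists>n. (x, y) \<in> E ^^ n then enat (LEAST n. (x, y) \<in> E ^^ n) else \<infinity>)"

definition lin_cent :: "(nat \<Rightarrow> real) \<Rightarrow> nat set \<Rightarrow> (nat \<times> nat) set \<Rightarrow> nat \<Rightarrow> real" where
  "lin_cent a V E i = (\<Sum>z \<in> {z \<in> V. gdist E z i < \<infinity>}. a (the_enat (gdist E z i)))"

definition score_monotone ::
  "(nat set \<Rightarrow> (nat \<times> nat) set \<Rightarrow> nat \<Rightarrow> real) \<Rightarrow> bool" where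
  "score_monotone f \<longleftrightarrow>
     (\<forall>V E x y. is_graph V E \<and> x \<in> V \<and> y \<in> V \<and> x \<noteq> y \<and> (x, y) \<notin> E
        \<longrightarrow> f V (insert (x, y) E) y > f V E y)"

definition Delta :: "(nat \<Rightarrow> real) \<Rightarrow> nat \<Rightarrow> real" where
  "Delta a i = (if i = 0 then 0 else a (i + 1) - a i)"

end

theory Submission
  imports Defs
begin

(* Adding the arc x -> y only shortens distances to y, and it brings x to distance 1.
  So if a is nonnegative and nonincreasing from index 1 on with a_2 < a_1, no summand of
  f(y) decreases while the summand of x grows strictly: from a_m with m >= 2, or from
  nothing if x could not reach y before, to a_1.

  Conversely, test f on a broom: the path n -> n-1 -> ... -> 0 with k leaves pointing to n.
  Inserting its arc 1 -> 0 last raises f(0) by a_1 + ... + a_n + k a_(n+1), which forces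
  a_(n+1) >= 0 as k grows. If 1 already reached 0 by a detour of length 2, the gain is
  (a_1 - a_2) + ... + (a_n - a_(n+1)) + k (a_(n+1) - a_(n+2)), which forces
  a_(n+2) <= a_(n+1), and for n = 1, k = 0 it is a_1 - a_2 > 0. *)

lemma relpow_mono:
  fixes E F :: "'a rel"
  shows "E \<subseteq> F \<Longrightarrow> E ^^ n \<subseteq> F ^^ n"
  by (induction n) (simp_all add: relcomp_mono)

lemma gdist_eq_enatD:
  "gdist E x y = enat m \<Longrightarrow> (x, y) \<in> E ^^ m \<and> (\<forall>n. (x, y) \<in> E ^^ n \<longrightarrow> m \<le> n)"
  unfolding gdist_def by (auto split: if_splits intro: LeastI Least_le)

lemma gdist_eq_enatI:
  "(x, y) \<in> E ^^ m \<Longrightarrow> (\<And>n. (x, y) \<in> E ^^ n \<Longrightarrow> m \<le> n) \<Longrightarrow> gdist E x y = enat m"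
  unfolding gdist_def by (auto intro!: Least_equality)

lemma gdist_le: "(x, y) \<in> E ^^ n \<Longrightarrow> gdist E x y \<le> enat n"
  unfolding gdist_def by (auto intro: Least_le)

lemma gdist_antimono:
  assumes "E \<subseteq> F"
  shows "gdist F x y \<le> gdist E x y"
proof (cases "gdist E x y")
  case (enat m)
  then have "(x, y) \<in> F ^^ m" using gdist_eq_enatD relpow_mono[OF assms] by blast
  with enat show ?thesis by (simp add: gdist_le)
qed simp

lemma gdist_self [simp]: "gdist E x x = 0"
proof -
  have "gdist E x x \<le> enat 0" by (intro gdist_le) simp
  then show ?thesis by (simp add: zero_enat_def[symmetric])
qed

lemma gdist_ge_1:
  assumes "x \<noteq> y"
  shows "1 \<le> gdist E x y"
proof (cases "gdist E x y")
  case (enat m)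
  then have "(x, y) \<in> E ^^ m" using gdist_eq_enatD by blast
  with assms have "m \<noteq> 0" by (cases m) auto
  with enat show ?thesis by (simp add: one_enat_def)
qed simp

lemma gdist_ge_2:
  assumes "x \<noteq> y" "(x, y) \<notin> E"
  shows "2 \<le> gdist E x y"
proof (cases "gdist E x y")
  case (enat m)
  then have "(x, y) \<in> E ^^ m" using gdist_eq_enatD by blast
  with assms have "m \<noteq> 0" "m \<noteq> 1" by (metis relpow_0_E relpow_1)+
  with enat show ?thesis by (simp add: numeral_eq_enat)
qed simp

lemma gdist_arc:
  assumes "x \<noteq> y" "(x, y) \<in> E"
  shows "gdist E x y = 1"
proof (rule order_antisym)
  show "gdist E x y \<le> 1" using assms(2) gdist_le[where n = 1] by (simp add: one_enat_def)
  show "1 \<le> gdist E x y" using assms(1) by (rule gdist_ge_1)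
qed

lemma gdist_eq_potential:
  fixes h :: "nat \<Rightarrow> enat"
  assumes root: "h y = 0"
    and arc: "\<And>u v. (u, v) \<in> E \<Longrightarrow> h u \<le> h v + 1"
    and tight: "\<And>u. u \<noteq> y \<Longrightarrow> h u \<noteq> \<infinity> \<Longrightarrow> \<exists>v. (u, v) \<in> E \<and> h u = h v + 1"
  shows "gdist E u y = h u"
proof -
  have lower: "h u \<le> enat n" if "(u, y) \<in> E ^^ n" for u n
    using that
  proof (induction n arbitrary: u)
    case 0
    then show ?case using root by (simp add: zero_enat_def)
  next
    case (Suc n)
    then obtain w where "(u, w) \<in> E" "(w, y) \<in> E ^^ n" by (blast dest: relpow_Suc_D2)
    then have "h u \<le> h w + 1" "h w \<le> enat n" using arc Suc.IH by blast+
    then show ?case by (metis add_right_mono eSuc_enat order_trans plus_1_eSuc(2))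
  qed
  have path: "(u, y) \<in> E ^^ m" if "h u = enat m" for u m
    using that
  proof (induction m arbitrary: u)
    case 0
    have "u = y"
    proof (rule ccontr)
      assume "u \<noteq> y"
      with 0 tight obtain v where "h u = h v + 1" by fastforce
      with 0 show False by (simp add: zero_enat_def[symmetric])
    qed
    then show ?case by simp
  next
    case (Suc m)
    then have "u \<noteq> y" using root by (auto simp: zero_enat_def)
    with Suc.prems tight obtain v where v: "(u, v) \<in> E" "h u = h v + 1" by fastforce
    with Suc.prems have "h v = enat m"
      by (metis eSuc_enat eSuc_inject plus_1_eSuc(2))
    with v show ?case by (blast intro: relpow_Suc_I2 Suc.IH)
  qed
  show ?thesis
  proof (cases "h u")
    case (enat m)
    with path lower show ?thesis by (metis gdist_eq_enatI enat_ord_simps(1))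
  next
    case infinity
    with lower have "\<nexists>n. (u, y) \<in> E ^^ n" by fastforce
    with infinity show ?thesis unfolding gdist_def by simp
  qed
qed

lemma gdist_no_in_arcs:
  assumes "\<And>u. (u, y) \<notin> E"
  shows "gdist E u y = (if u = y then 0 else \<infinity>)"
  by (rule gdist_eq_potential) (use assms in auto)

definition dist_weight :: "(nat \<Rightarrow> real) \<Rightarrow> enat \<Rightarrow> real" where
  "dist_weight a d = (case d of enat m \<Rightarrow> a m | \<infinity> \<Rightarrow> 0)"

lemma dist_weight_simps [simp]:
  "dist_weight a (enat m) = a m"
  "dist_weight a \<infinity> = 0"
  "dist_weight a 0 = a 0"
  "dist_weight a 1 = a 1"
  "dist_weight a (numeral k) = a (numeral k)"
  by (simp_all add: dist_weight_def zero_enat_def one_enat_def numeral_eq_enat)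

lemma lin_cent_eq_sum_dist_weight:
  assumes "finite V"
  shows "lin_cent a V E y = (\<Sum>z \<in> V. dist_weight a (gdist E z y))"
proof -
  have "dist_weight a (gdist E z y) = (if gdist E z y < \<infinity> then a (the_enat (gdist E z y)) else 0)"
    for z by (cases "gdist E z y") simp_all
  then show ?thesis
    unfolding lin_cent_def using assms by (simp add: sum.inter_filter)
qed

lemma dist_weight_antimono:
  assumes dec: "\<forall>i\<ge>1. a (i + 1) \<le> a i \<and> 0 \<le> a (i + 1)"
    and "1 \<le> d" "d \<le> d'"
  shows "dist_weight a d' \<le> dist_weight a d"
proof (cases d)
  case (enat m)
  then have "1 \<le> m" using \<open>1 \<le> d\<close> by (simp add: one_enat_def)
  show ?thesis
  proof (cases d')
    case (enat m')
    with \<open>d = enat m\<close> \<open>d \<le> d'\<close> have "m \<le> m'" by simp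
    moreover have "{m..<m'} \<subseteq> {1..}" using \<open>1 \<le> m\<close> by auto
    moreover have "a (Suc i) \<le> a i" if "i \<in> {1..}" for i using dec that by simp
    ultimately have "a m' \<le> a m" by (rule lift_Suc_antimono_le_ivl[where N = "{1..}", rotated])
    with enat \<open>d = enat m\<close> show ?thesis by simp
  next
    case infinity
    have "0 \<le> a m" using dec[rule_format, OF \<open>1 \<le> m\<close>] by linarith
    with infinity \<open>d = enat m\<close> show ?thesis by simp
  qed
next
  case infinity
  with \<open>d \<le> d'\<close> show ?thesis by simp
qed

lemma score_monotone_lin_centI:
  assumes strict: "a 2 < a 1"
    and dec: "\<forall>i\<ge>1. a (i + 1) \<le> a i \<and> 0 \<le> a (i + 1)"
  shows "score_monotone (lin_cent a)"
  unfolding score_monotone_def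
proof (intro allI impI, elim conjE)
  fix V E x y
  assume graph: "is_graph V E" and "x \<in> V" "x \<noteq> y" "(x, y) \<notin> E"
  let ?E' = "insert (x, y) E"
  let ?w = "\<lambda>F z. dist_weight a (gdist F z y)"
  have weight_le: "?w E z \<le> ?w ?E' z" for z
  proof (cases "z = y")
    case False
    then show ?thesis
      using dist_weight_antimono[OF dec gdist_ge_1] gdist_antimono[of E ?E'] by blast
  qed simp
  have "gdist ?E' x y = 1" using \<open>x \<noteq> y\<close> by (simp add: gdist_arc)
  moreover have "2 \<le> gdist E x y" using \<open>x \<noteq> y\<close> \<open>(x, y) \<notin> E\<close> by (rule gdist_ge_2)
  then have "?w E x \<le> a 2"
    using dist_weight_antimono[OF dec, of 2 "gdist E x y"] by simp
  ultimately have "?w E x < ?w ?E' x" using strict by simp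
  then have "(\<Sum>z \<in> V. ?w E z) < (\<Sum>z \<in> V. ?w ?E' z)"
    using graph weight_le \<open>x \<in> V\<close> unfolding is_graph_def by (blast intro: sum_strict_mono_ex1)
  then show "lin_cent a V E y < lin_cent a V ?E' y"
    using graph unfolding is_graph_def by (simp add: lin_cent_eq_sum_dist_weight)
qed

lemma score_monotoneD:
  "score_monotone f \<Longrightarrow> is_graph V E \<Longrightarrow> x \<in> V \<Longrightarrow> y \<in> V \<Longrightarrow> x \<noteq> y \<Longrightarrow> (x, y) \<notin> E
    \<Longrightarrow> f V E y < f V (insert (x, y) E) y"
  unfolding score_monotone_def by blast

definition broom :: "nat \<Rightarrow> nat \<Rightarrow> (nat \<times> nat) set" where
  "broom n k = {(Suc j, j) | j. j < n} \<union> {(l, n) | l. n < l \<and> l \<le> n + k}"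

lemma broom_arcD:
  "(u, v) \<in> broom n k \<Longrightarrow> v < u \<and> u \<le> n + k \<and> min u (Suc n) = Suc (min v (Suc n))"
  unfolding broom_def by auto

lemma broom_arcI: "0 < u \<Longrightarrow> u \<le> n + k \<Longrightarrow> (u, if u \<le> n then u - 1 else n) \<in> broom n k"
  unfolding broom_def by auto

lemma broom_arc_into_0_iff: "0 < n \<Longrightarrow> (u, 0) \<in> broom n k \<longleftrightarrow> u = 1"
  unfolding broom_def by auto

lemma broom_subset: "broom n k \<subseteq> {0..n + k} \<times> {0..n + k}"
  by (auto dest: broom_arcD)

lemma gdist_broom: "gdist (broom n k) u 0 = (if u \<le> n + k then enat (min u (Suc n)) else \<infinity>)"
    (is "_ = ?h u")
proof (rule gdist_eq_potential)
  fix u v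
  assume "(u, v) \<in> broom n k"
  then show "?h u \<le> ?h v + 1" using broom_arcD[of u v n k] by (simp add: plus_1_eSuc eSuc_enat)
next
  fix u :: nat
  assume "u \<noteq> 0" "?h u \<noteq> \<infinity>"
  then have arc: "(u, if u \<le> n then u - 1 else n) \<in> broom n k" (is "(u, ?v) \<in> _")
    by (intro broom_arcI) (simp_all split: if_splits)
  moreover have "?h u = ?h ?v + 1" using broom_arcD[OF arc] by (simp add: plus_1_eSuc eSuc_enat)
  ultimately show "\<exists>v. (u, v) \<in> broom n k \<and> ?h u = ?h v + 1" by blast
qed (simp add: zero_enat_def)

definition detour :: "nat \<Rightarrow> nat \<Rightarrow> (nat \<times> nat) set" where
  "detour n k = {(1, Suc (n + k)), (Suc (n + k), 0)}"

lemma gdist_broom_detour: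
  assumes "0 < n"
  shows "gdist (broom n k \<union> detour n k) u 0 =
    (if u \<le> n + k then enat (min u (Suc n)) else if u = Suc (n + k) then enat 1 else \<infinity>)"
    (is "_ = ?h u")
proof (rule gdist_eq_potential)
  fix u v
  assume "(u, v) \<in> broom n k \<union> detour n k"
  then consider "(u, v) \<in> broom n k" | "u = 1" "v = Suc (n + k)" | "u = Suc (n + k)" "v = 0"
    unfolding detour_def by blast
  then show "?h u \<le> ?h v + 1"
  proof cases
    case 1
    then show ?thesis using broom_arcD[of u v n k] by (simp add: plus_1_eSuc eSuc_enat)
  qed (use assms in \<open>simp_all add: plus_1_eSuc eSuc_enat\<close>)
next
  fix u :: nat
  assume "u \<noteq> 0" "?h u \<noteq> \<infinity>"
  then consider "u \<le> n + k" | "u = Suc (n + k)" by (simp split: if_splits)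
  then show "\<exists>v. (u, v) \<in> broom n k \<union> detour n k \<and> ?h u = ?h v + 1"
  proof cases
    case 1
    with \<open>u \<noteq> 0\<close> have arc: "(u, if u \<le> n then u - 1 else n) \<in> broom n k" (is "(u, ?v) \<in> _")
      by (intro broom_arcI) simp_all
    moreover have "?h u = ?h ?v + 1"
      using broom_arcD[OF arc] by (simp add: plus_1_eSuc eSuc_enat)
    ultimately show ?thesis by blast
  next
    case 2
    then have "(u, 0) \<in> detour n k" "?h u = ?h 0 + 1" by (simp_all add: detour_def plus_1_eSuc eSuc_enat)
    then show ?thesis by blast
  qed
qed (simp add: zero_enat_def)

lemma gdist_broom_detour_minus_arc:
  assumes "0 < n"
  shows "gdist (broom n k - {(1, 0)} \<union> detour n k) u 0 =
    (if u = 0 then enat 0 else if u \<le> n + k then enat (Suc (min u (Suc n)))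
     else if u = Suc (n + k) then enat 1 else \<infinity>)"
    (is "_ = ?h u")
proof (rule gdist_eq_potential)
  fix u v
  assume "(u, v) \<in> broom n k - {(1, 0)} \<union> detour n k"
  then consider "(u, v) \<in> broom n k" "(u, v) \<noteq> (1, 0)" | "u = 1" "v = Suc (n + k)" | "u = Suc (n + k)" "v = 0"
    unfolding detour_def by blast
  then show "?h u \<le> ?h v + 1"
  proof cases
    case 1
    then have "v \<noteq> 0" by (metis broom_arc_into_0_iff[OF assms])
    with 1 show ?thesis using broom_arcD[OF 1(1)] by (simp add: plus_1_eSuc eSuc_enat)
  qed (use assms in \<open>simp_all add: plus_1_eSuc eSuc_enat\<close>)
next
  fix u :: nat
  assume "u \<noteq> 0" "?h u \<noteq> \<infinity>"
  then have "u \<le> n + k \<or> u = Suc (n + k)" by (simp split: if_splits)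
  with \<open>u \<noteq> 0\<close> consider "u = 1" | "1 < u" "u \<le> n + k" | "u = Suc (n + k)" by linarith
  then show "\<exists>v. (u, v) \<in> broom n k - {(1, 0)} \<union> detour n k \<and> ?h u = ?h v + 1"
  proof cases
    case 1
    with assms have "(u, Suc (n + k)) \<in> detour n k" "?h u = ?h (Suc (n + k)) + 1"
      by (simp_all add: detour_def plus_1_eSuc eSuc_enat)
    then show ?thesis by blast
  next
    case 2
    then have arc: "(u, if u \<le> n then u - 1 else n) \<in> broom n k" (is "(u, ?v) \<in> _")
      by (intro broom_arcI) simp_all
    moreover have "?v \<noteq> 0" "?h u = ?h ?v + 1"
      using broom_arcD[OF arc] 2 assms by (simp_all add: plus_1_eSuc eSuc_enat)
    ultimately show ?thesis using 2 by blast
  next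
    case 3
    then have "(u, 0) \<in> detour n k" "?h u = ?h 0 + 1" by (simp_all add: detour_def plus_1_eSuc eSuc_enat)
    then show ?thesis by blast
  qed
qed (simp add: zero_enat_def)

lemma lin_cent_atLeastAtMost_0:
  "lin_cent a {0..N} E 0 = a 0 + (\<Sum>z = 1..N. dist_weight a (gdist E z 0))"
  by (simp add: lin_cent_eq_sum_dist_weight sum.atLeast_Suc_atMost)

lemma sum_min_Suc:
  fixes f :: "nat \<Rightarrow> 'a::semiring_1"
  shows "(\<Sum>z = 1..n + k. f (min z (Suc n))) = (\<Sum>z = 1..n. f z) + of_nat k * f (Suc n)"
proof -
  have "(\<Sum>z = 1..n + k. f (min z (Suc n)))
      = (\<Sum>z = 1..n. f (min z (Suc n))) + (\<Sum>z = n + 1..n + k. f (min z (Suc n)))"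
    by (rule sum.ub_add_nat) simp
  also have "\<dots> = (\<Sum>z = 1..n. f z) + (\<Sum>z = n + 1..n + k. f (Suc n))"
    by (intro arg_cong2[where f = "(+)"] sum.cong) auto
  finally show ?thesis by simp
qed

lemma score_monotone_broom_ineq:
  assumes sm: "score_monotone (lin_cent a)" and "0 < n"
  shows "0 < (\<Sum>z = 1..n. a z) + real k * a (Suc n)"
proof -
  let ?V = "{0..n + k}" and ?E = "broom n k - {(1, 0)}"
  have "is_graph ?V ?E" using broom_subset by (auto simp: is_graph_def)
  then have "lin_cent a ?V ?E 0 < lin_cent a ?V (insert (1, 0) ?E) 0"
    by (rule score_monotoneD[OF sm]) (use \<open>0 < n\<close> in auto)
  also have "insert (1, 0) ?E = broom n k"
    using broom_arc_into_0_iff[OF \<open>0 < n\<close>] by auto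
  finally have "lin_cent a ?V ?E 0 < lin_cent a ?V (broom n k) 0" .
  moreover have "lin_cent a ?V ?E 0 = a 0"
  proof -
    have "gdist ?E z 0 = (if z = 0 then 0 else \<infinity>)" for z
      by (rule gdist_no_in_arcs) (simp add: broom_arc_into_0_iff[OF \<open>0 < n\<close>])
    then show ?thesis by (simp add: lin_cent_atLeastAtMost_0)
  qed
  moreover have "lin_cent a ?V (broom n k) 0 = a 0 + (\<Sum>z = 1..n + k. a (min z (Suc n)))"
    unfolding lin_cent_atLeastAtMost_0 gdist_broom by simp
  ultimately show ?thesis using sum_min_Suc[of a n k] by simp
qed

lemma score_monotone_detour_ineq:
  assumes sm: "score_monotone (lin_cent a)" and "0 < n"
  shows "0 < (\<Sum>z = 1..n. a z - a (Suc z)) + real k * (a (Suc n) - a (Suc (Suc n)))"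
proof -
  let ?V = "{0..Suc (n + k)}" and ?E = "broom n k - {(1, 0)} \<union> detour n k"
  have "broom n k \<subseteq> ?V \<times> ?V" using broom_subset[of n k] by fastforce
  then have "is_graph ?V ?E" by (auto simp: is_graph_def detour_def)
  then have "lin_cent a ?V ?E 0 < lin_cent a ?V (insert (1, 0) ?E) 0"
    by (rule score_monotoneD[OF sm]) (use \<open>0 < n\<close> in \<open>auto simp: detour_def\<close>)
  also have "insert (1, 0) ?E = broom n k \<union> detour n k"
    using broom_arc_into_0_iff[OF \<open>0 < n\<close>] by auto
  finally have "lin_cent a ?V ?E 0 < lin_cent a ?V (broom n k \<union> detour n k) 0" .
  moreover have "lin_cent a ?V ?E 0 = a 0 + (\<Sum>z = 1..n + k. a (Suc (min z (Suc n)))) + a 1"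
    unfolding lin_cent_atLeastAtMost_0 gdist_broom_detour_minus_arc[OF \<open>0 < n\<close>] by simp
  moreover have "lin_cent a ?V (broom n k \<union> detour n k) 0
      = a 0 + (\<Sum>z = 1..n + k. a (min z (Suc n))) + a 1"
    unfolding lin_cent_atLeastAtMost_0 gdist_broom_detour[OF \<open>0 < n\<close>] by simp
  ultimately show ?thesis
    using sum_min_Suc[of "\<lambda>d. a d - a (Suc d)" n k] by (simp add: sum_subtractf)
qed

lemma nonneg_if_all_pos_linear:
  fixes C D :: real
  assumes "\<And>k::nat. 0 < C + real k * D"
  shows "0 \<le> D"
proof (rule ccontr)
  assume "\<not> 0 \<le> D"
  then obtain k :: nat where "C < real k * - D" using ex_less_of_nat_mult[of "- D" C] by auto
  with assms[of k] show False by simp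
qed

lemma score_monotone_lin_centD:
  assumes sm: "score_monotone (lin_cent a)"
  shows "a 2 < a 1 \<and> (\<forall>i\<ge>1. a (i + 1) \<le> a i \<and> 0 \<le> a (i + 1))"
proof -
  have nonneg: "0 \<le> a (Suc n)" if "0 < n" for n
    by (rule nonneg_if_all_pos_linear) (rule score_monotone_broom_ineq[OF sm that])
  have "0 \<le> a (Suc n) - a (Suc (Suc n))" if "0 < n" for n
    by (rule nonneg_if_all_pos_linear) (rule score_monotone_detour_ineq[OF sm that])
  then have dec: "a (Suc (Suc n)) \<le> a (Suc n)" if "0 < n" for n
    using that by simp
  have strict: "a 2 < a 1"
    using score_monotone_detour_ineq[OF sm, of 1 0] by (simp add: numeral_2_eq_2)
  have "a (i + 1) \<le> a i \<and> 0 \<le> a (i + 1)" if "1 \<le> i" for i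
  proof (cases "i = 1")
    case True
    with strict show ?thesis using nonneg[of 1] by (simp add: numeral_2_eq_2)
  next
    case False
    with that obtain m where "i = Suc m" "0 < m" by (cases i) auto
    then show ?thesis using dec[of m] nonneg[of i] by simp
  qed
  with strict show ?thesis by blast
qed

lemma score_monotone_lin_cent_iff:
  "score_monotone (lin_cent a) \<longleftrightarrow> a 1 > a 2 \<and> (\<forall>i\<ge>1. a i \<ge> a (i + 1) \<and> a (i + 1) \<ge> 0)"
proof
  assume "a 1 > a 2 \<and> (\<forall>i\<ge>1. a i \<ge> a (i + 1) \<and> a (i + 1) \<ge> 0)"
  then show "score_monotone (lin_cent a)" by (elim conjE) (rule score_monotone_lin_centI)
qed (rule score_monotone_lin_centD)

lemma Delta_conditions_iff:
  assumes "a 0 = 0"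
  shows "(\<forall>i. a i \<ge> 0) \<and> (\<forall>i. Delta a i \<le> 0) \<and> Delta a 1 < 0 \<longleftrightarrow>
    a 1 > a 2 \<and> (\<forall>i\<ge>1. a i \<ge> a (i + 1) \<and> a (i + 1) \<ge> 0)"
proof
  assume lhs: "(\<forall>i. a i \<ge> 0) \<and> (\<forall>i. Delta a i \<le> 0) \<and> Delta a 1 < 0"
  have "a (i + 1) \<le> a i" if "1 \<le> i" for i
    using lhs that by (auto simp: Delta_def dest: spec[of _ i])
  with lhs show "a 1 > a 2 \<and> (\<forall>i\<ge>1. a i \<ge> a (i + 1) \<and> a (i + 1) \<ge> 0)"
    by (simp add: Delta_def numeral_2_eq_2)
next
  assume rhs: "a 1 > a 2 \<and> (\<forall>i\<ge>1. a i \<ge> a (i + 1) \<and> a (i + 1) \<ge> 0)"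
  have "a i \<ge> 0" for i
  proof (cases "i = 0")
    case False
    with rhs show ?thesis by (auto dest: spec[of _ i])
  qed (simp add: assms)
  moreover have "Delta a i \<le> 0" for i
    using rhs by (auto simp: Delta_def)
  ultimately show "(\<forall>i. a i \<ge> 0) \<and> (\<forall>i. Delta a i \<le> 0) \<and> Delta a 1 < 0"
    using rhs by (simp add: Delta_def numeral_2_eq_2)
qed

theorem proposition3:
  fixes a :: "nat \<Rightarrow> real"
  assumes "a 0 = 0"
  shows "(score_monotone (lin_cent a) \<longleftrightarrow>
            (\<forall>i. a i \<ge> 0) \<and> (\<forall>i. Delta a i \<le> 0) \<and> Delta a 1 < 0)
       \<and> ((\<forall>i. a i \<ge> 0) \<and> (\<forall>i. Delta a i \<le> 0) \<and> Delta a 1 < 0 \<longleftrightarrow>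
            a 1 > a 2 \<and> (\<forall>i\<ge>1. a i \<ge> a (i + 1) \<and> a (i + 1) \<ge> 0))"
  by (simp only: score_monotone_lin_cent_iff Delta_conditions_iff[of a, OF assms])

end
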